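(* Let $\theta\colon G\curvearrowright\Omega$ and $\theta'\colon H\curvearrowright\Omega'$ be partial actions of discrete groups on topological spaces with $\theta\approx\theta'$. Then there is a partial action $\gamma$ of $G\times H$ on a topological space such that $\theta\xleftarrow{\approx}\gamma\xrightarrow{\approx}\theta'$, i.e. there are direct dynamical equivalences from $\gamma$ to $\theta$ and from $\gamma$ to $\theta'$.
   Context: For a partial action $\theta\colon G\curvearrowright\Omega$, $\Omega_g$ denotes the domain (open) of $\theta_{g^{-1}}$, so $\theta_g\colon\Omega_{g^{-1}}\to\Omega_g$, and $g.x=\theta_g(x)$. Dynamical equivalence $\theta\approx\theta'$ means: there are a homeomorphism $\varphi\colon\Omega\to\Omega'$ and continuous maps $a\colon\bigcup_{g\in G}\{g\}\times\Omega_{g^{-1}}\to H$, $b\colon\bigcup_{h\in H}\{h\}\times\Omega'_{h^{-1}}\to G$ ($G,H$ discrete) such that for all $g\in G,h\in H,x\in\Omega_{g^{-1}},y\in\Omega'_{h^{-1}}$: (1) $\varphi(x)\in\Omega'_{a(g,x)^{-1}}$ and $\varphi(g.x)=a(g,x).\varphi(x)$; (2) $\varphi^{-1}(y)\in\Omega_{b(h,y)^{-1}}$ and $\varphi^{-1}(h.y)=b(h,y).\varphi^{-1}(y)$; (3) $b(a(g,x),\varphi(x))=g$ and $a(b(h,y),\varphi^{-1}(y))=h$; (4) $a(g'g,x)=a(g',g.x)a(g,x)$ if $g.x\in\Omega_{g'^{-1}}$; (5) $b(h'h,y)=b(h',h.y)b(h,y)$ if $h.y\in\Omega'_{h'^{-1}}$.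 Given a group homomorphism $\Psi\colon G\to H$, a continuous map $\varphi\colon\Omega\to\Omega'$ is $\Psi$-equivariant if $\varphi(\Omega_g)\subseteq\Omega'_{\Psi(g)}$ for all $g$ and $\varphi(g.x)=\Psi(g).\varphi(x)$ for $x\in\Omega_{g^{-1}}$. A pair $(\varphi,\Psi)$ with $\varphi$ $\Psi$-equivariant is a direct dynamical equivalence, written $\theta\xrightarrow{\approx}\theta'$, if (a) $\varphi$ is a homeomorphism, (b) $\Omega_g\cap\Omega_{g'}=\emptyset$ for all $g\ne g'$ with $\Psi(g)=\Psi(g')$, (c) $\Omega'_h=\bigcup_{\Psi(g)=h}\varphi(\Omega_g)$ for all $h\in H$. *)

theory Defs
  imports "HOL-Analysis.Analysis" "HOL-Library.Product_Plus"
begin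

text \<open>Groups are written additively (type class group_add, not necessarily abelian):
  g + h is the group product gh, -g is the inverse, 0 the identity.
  A partial action of the (discrete) group 'g on the space X is given by
  the domains D g (= Omega_g, the domain of theta_(-g)) and the maps theta g,
  theta g : D (-g) -> D g.\<close>

definition partial_action ::
  "'a topology \<Rightarrow> ('g::group_add \<Rightarrow> 'a set) \<Rightarrow> ('g \<Rightarrow> 'a \<Rightarrow> 'a) \<Rightarrow> bool" where
  "partial_action X D \<theta> \<longleftrightarrow>
     (\<forall>g. openin X (D g)) \<and>
     D 0 = topspace X \<and>
     (\<forall>x\<in>topspace X. \<theta> 0 x = x) \<and>
     (\<forall>g. homeomorphic_map (subtopology X (D (- g))) (subtopology X (D g)) (\<theta> g)) \<and>
     (\<forall>g h x. x \<in> D (- h) \<and> \<theta> h x \<in> D (- g) \<longrightarrow>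
          x \<in> D (- (g + h)) \<and> \<theta> (g + h) x = \<theta> g (\<theta> h x))"

definition dyn_equiv ::
  "'a topology \<Rightarrow> ('g::group_add \<Rightarrow> 'a set) \<Rightarrow> ('g \<Rightarrow> 'a \<Rightarrow> 'a) \<Rightarrow>
   'b topology \<Rightarrow> ('h::group_add \<Rightarrow> 'b set) \<Rightarrow> ('h \<Rightarrow> 'b \<Rightarrow> 'b) \<Rightarrow> bool" where
  "dyn_equiv X D \<theta> X' D' \<theta>' \<longleftrightarrow>
    (\<exists>\<phi> \<psi> (a :: 'g \<times> 'a \<Rightarrow> 'h) (b :: 'h \<times> 'b \<Rightarrow> 'g).
       homeomorphic_maps X X' \<phi> \<psi> \<and>
       continuous_map (subtopology (prod_topology (discrete_topology UNIV) X) (SIGMA g:UNIV. D (- g)))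
                      (discrete_topology UNIV) a \<and>
       continuous_map (subtopology (prod_topology (discrete_topology UNIV) X') (SIGMA h:UNIV. D' (- h)))
                      (discrete_topology UNIV) b \<and>
       (\<forall>g x. x \<in> D (- g) \<longrightarrow>
           \<phi> x \<in> D' (- a (g, x)) \<and> \<phi> (\<theta> g x) = \<theta>' (a (g, x)) (\<phi> x)) \<and>
       (\<forall>h y. y \<in> D' (- h) \<longrightarrow>
           \<psi> y \<in> D (- b (h, y)) \<and> \<psi> (\<theta>' h y) = \<theta> (b (h, y)) (\<psi> y)) \<and>
       (\<forall>g x. x \<in> D (- g) \<longrightarrow> b (a (g, x), \<phi> x) = g) \<and>
       (\<forall>h y. y \<in> D' (- h) \<longrightarrow> a (b (h, y), \<psi> y) = h) \<and>
       (\<forall>g g' x. x \<in> D (- g) \<and> \<theta> g x \<in> D (- g') \<longrightarrow>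
           a (g' + g, x) = a (g', \<theta> g x) + a (g, x)) \<and>
       (\<forall>h h' y. y \<in> D' (- h) \<and> \<theta>' h y \<in> D' (- h') \<longrightarrow>
           b (h' + h, y) = b (h', \<theta>' h y) + b (h, y)))"

definition group_hom :: "('g::group_add \<Rightarrow> 'h::group_add) \<Rightarrow> bool" where
  "group_hom \<Psi> \<longleftrightarrow> (\<forall>x y. \<Psi> (x + y) = \<Psi> x + \<Psi> y)"

definition equivariant ::
  "'a topology \<Rightarrow> ('g::group_add \<Rightarrow> 'a set) \<Rightarrow> ('g \<Rightarrow> 'a \<Rightarrow> 'a) \<Rightarrow>
   'b topology \<Rightarrow> ('h::group_add \<Rightarrow> 'b set) \<Rightarrow> ('h \<Rightarrow> 'b \<Rightarrow> 'b) \<Rightarrow>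
   ('a \<Rightarrow> 'b) \<Rightarrow> ('g \<Rightarrow> 'h) \<Rightarrow> bool" where
  "equivariant X D \<theta> X' D' \<theta>' \<phi> \<Psi> \<longleftrightarrow>
     continuous_map X X' \<phi> \<and>
     (\<forall>g. \<phi> ` D g \<subseteq> D' (\<Psi> g)) \<and>
     (\<forall>g x. x \<in> D (- g) \<longrightarrow> \<phi> (\<theta> g x) = \<theta>' (\<Psi> g) (\<phi> x))"

definition direct_dyn_equiv ::
  "'a topology \<Rightarrow> ('g::group_add \<Rightarrow> 'a set) \<Rightarrow> ('g \<Rightarrow> 'a \<Rightarrow> 'a) \<Rightarrow>
   'b topology \<Rightarrow> ('h::group_add \<Rightarrow> 'b set) \<Rightarrow> ('h \<Rightarrow> 'b \<Rightarrow> 'b) \<Rightarrow>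
   ('a \<Rightarrow> 'b) \<Rightarrow> ('g \<Rightarrow> 'h) \<Rightarrow> bool" where
  "direct_dyn_equiv X D \<theta> X' D' \<theta>' \<phi> \<Psi> \<longleftrightarrow>
     group_hom \<Psi> \<and>
     equivariant X D \<theta> X' D' \<theta>' \<phi> \<Psi> \<and>
     homeomorphic_map X X' \<phi> \<and>
     (\<forall>g g'. g \<noteq> g' \<and> \<Psi> g = \<Psi> g' \<longrightarrow> D g \<inter> D g' = {}) \<and>
     (\<forall>h. D' h = (\<Union>g\<in>{g. \<Psi> g = h}. \<phi> ` D g))"

end

theory Submission
  imports Defs
begin

text \<open>The common refinement acts on the space of the first action: the element (g, h) of
  G \<times> H acts by \<theta> g, restricted to the points x where the cocycle takes the value a (g, x) = h.
  Continuity of a into the discrete group H makes these domains open, and the cocycle identity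
  makes the restrictions a partial action. Forgetting h gives a direct equivalence onto \<theta>;
  applying \<phi> and forgetting g gives one onto \<theta>', where disjointness of the domains over a
  fixed h comes from b inverting a, and the covering of \<Omega>'_h from the point \<psi> z, which lies
  in the domain indexed by (- b (- h, z), h).\<close>

lemma partial_action_domain_subset:
  "partial_action X D \<theta> \<Longrightarrow> D g \<subseteq> topspace X"
  unfolding partial_action_def by (meson openin_subset)

lemma partial_action_maps_to:
  assumes "partial_action X D \<theta>" "x \<in> D (- g)"
  shows "\<theta> g x \<in> D g"
proof -
  have "homeomorphic_map (subtopology X (D (- g))) (subtopology X (D g)) (\<theta> g)"
    using assms(1) unfolding partial_action_def by blast
  then have "\<theta> g ` (topspace X \<inter> D (- g)) = topspace X \<inter> D g"
    using homeomorphic_imp_surjective_map by fastforce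
  then show ?thesis
    using assms partial_action_domain_subset[OF assms(1)] by blast
qed

locale partial_action_cocycle =
  fixes X :: "'a topology" and D :: "'g::group_add \<Rightarrow> 'a set" and \<theta> :: "'g \<Rightarrow> 'a \<Rightarrow> 'a"
    and a :: "'g \<times> 'a \<Rightarrow> 'h::group_add"
  assumes partial_action: "partial_action X D \<theta>"
    and continuous_cocycle:
      "continuous_map (subtopology (prod_topology (discrete_topology UNIV) X) (SIGMA g:UNIV. D (- g)))
                      (discrete_topology UNIV) a"
    and cocycle_add:
      "\<And>g g' x. x \<in> D (- g) \<Longrightarrow> \<theta> g x \<in> D (- g') \<Longrightarrow> a (g' + g, x) = a (g', \<theta> g x) + a (g, x)"
begin

lemma cocycle_zero:
  assumes "x \<in> topspace X"
  shows "a (0, x) = 0"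
proof -
  have "x \<in> D (- 0)" and \<theta>0: "\<theta> 0 x = x"
    using partial_action assms unfolding partial_action_def by auto
  then have "a (0 + 0, x) = a (0, \<theta> 0 x) + a (0, x)"
    by (intro cocycle_add) simp_all
  then have "a (0, x) + a (0, x) = a (0, x) + 0"
    using \<theta>0 by simp
  then show ?thesis
    by (rule add_left_imp_eq)
qed

lemma cocycle_minus:
  assumes "x \<in> D (- g)"
  shows "a (- g, \<theta> g x) = - a (g, x)"
proof -
  have "\<theta> g x \<in> D (- (- g))"
    using partial_action_maps_to[OF partial_action assms] by simp
  then have "a (- g + g, x) = a (- g, \<theta> g x) + a (g, x)"
    using cocycle_add[OF assms] by blast
  moreover have "x \<in> topspace X"
    using assms partial_action_domain_subset[OF partial_action] by blast
  ultimately show ?thesis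
    using cocycle_zero by (simp add: eq_neg_iff_add_eq_0)
qed

definition graph_domain :: "'g \<times> 'h \<Rightarrow> 'a set" where
  "graph_domain = (\<lambda>(g, h). {y \<in> D g. a (- g, y) = - h})"

lemma mem_graph_domain: "y \<in> graph_domain (g, h) \<longleftrightarrow> y \<in> D g \<and> a (- g, y) = - h"
  unfolding graph_domain_def by simp

lemma mem_graph_domain_minus: "x \<in> graph_domain (- g, - h) \<longleftrightarrow> x \<in> D (- g) \<and> a (g, x) = h"
  unfolding graph_domain_def by auto

lemma graph_domain_subset: "graph_domain (g, h) \<subseteq> D g"
  by (auto simp: mem_graph_domain)

lemma openin_graph_domain: "openin X (graph_domain (g, h))"
proof -
  have "continuous_map (subtopology X (D g))
          (subtopology (prod_topology (discrete_topology UNIV) X) (SIGMA g:UNIV. D (- g))) (\<lambda>y. (- g, y))"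
    by (auto intro!: continuous_map_into_subtopology continuous_map_pairedI
             simp: continuous_map_from_subtopology)
  from continuous_map_compose[OF this continuous_cocycle]
  have "continuous_map (subtopology X (D g)) (discrete_topology UNIV) (\<lambda>y. a (- g, y))"
    by (simp add: o_def)
  then have "openin (subtopology X (D g)) {y \<in> topspace (subtopology X (D g)). a (- g, y) \<in> {- h}}"
    by (rule openin_continuous_map_preimage) simp
  moreover have "{y \<in> topspace (subtopology X (D g)). a (- g, y) \<in> {- h}} = graph_domain (g, h)"
    using partial_action_domain_subset[OF partial_action, of g] by (auto simp: mem_graph_domain)
  moreover have "openin X (D g)"
    using partial_action unfolding partial_action_def by blast
  ultimately show ?thesis
    using openin_trans_full by metis
qed

lemma homeomorphic_map_graph_domain:
  "homeomorphic_map (subtopology X (graph_domain (- (g, h)))) (subtopology X (graph_domain (g, h))) (\<theta> g)"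
proof -
  have hom: "homeomorphic_map (subtopology X (D (- g))) (subtopology X (D g)) (\<theta> g)"
    using partial_action unfolding partial_action_def by blast
  have "homeomorphic_map (subtopology (subtopology X (D (- g))) (graph_domain (- (g, h))))
                         (subtopology (subtopology X (D g)) (graph_domain (g, h))) (\<theta> g)"
  proof (rule homeomorphic_map_subtopologies_alt[OF hom])
    fix x assume "x \<in> topspace (subtopology X (D (- g)))"
    then have x: "x \<in> D (- g)" by simp
    show "\<theta> g x \<in> graph_domain (g, h) \<longleftrightarrow> x \<in> graph_domain (- (g, h))"
      using x partial_action_maps_to[OF partial_action x] cocycle_minus[OF x]
      by (auto simp: mem_graph_domain mem_graph_domain_minus)
  qed
  moreover have "graph_domain (- (g, h)) \<subseteq> D (- g)"
    using graph_domain_subset[of "- g" "- h"] by simp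
  ultimately show ?thesis
    using graph_domain_subset[of g h] by (simp add: subtopology_subtopology Int_absorb1)
qed

lemma partial_action_graph: "partial_action X graph_domain (\<lambda>gh. \<theta> (fst gh))"
  unfolding partial_action_def
proof (intro conjI allI impI)
  fix gh :: "'g \<times> 'h"
  show "openin X (graph_domain gh)"
    using openin_graph_domain by (cases gh) simp
  show "homeomorphic_map (subtopology X (graph_domain (- gh))) (subtopology X (graph_domain gh))
          (\<theta> (fst gh))"
    using homeomorphic_map_graph_domain by (cases gh) simp
next
  have "D 0 = topspace X"
    using partial_action unfolding partial_action_def by blast
  then show "graph_domain 0 = topspace X"
    using cocycle_zero by (auto simp: graph_domain_def zero_prod_def)
next
  show "\<forall>x\<in>topspace X. \<theta> (fst 0) x = x"
    using partial_action unfolding partial_action_def by simp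
next
  fix gh kl :: "'g \<times> 'h" and x
  assume "x \<in> graph_domain (- kl) \<and> \<theta> (fst kl) x \<in> graph_domain (- gh)"
  moreover obtain g h k l where "gh = (g, h)" "kl = (k, l)"
    by (cases gh, cases kl)
  ultimately have x: "x \<in> D (- k)" "a (k, x) = l" "\<theta> k x \<in> D (- g)" "a (g, \<theta> k x) = h"
    and gh: "gh = (g, h)" and kl: "kl = (k, l)"
    by (auto simp: mem_graph_domain_minus)
  have "x \<in> D (- (g + k)) \<and> \<theta> (g + k) x = \<theta> g (\<theta> k x)"
    using partial_action x(1,3) unfolding partial_action_def by blast
  then show "x \<in> graph_domain (- (gh + kl))" and "\<theta> (fst (gh + kl)) x = \<theta> (fst gh) (\<theta> (fst kl) x)"
    using cocycle_add[OF x(1,3)] x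
    by (auto simp: gh kl mem_graph_domain_minus)
qed

lemma direct_dyn_equiv_graph_fst:
  "direct_dyn_equiv X graph_domain (\<lambda>gh. \<theta> (fst gh)) X D \<theta> id fst"
  unfolding direct_dyn_equiv_def group_hom_def equivariant_def
proof (intro conjI allI impI)
  fix gh :: "'g \<times> 'h"
  show "id ` graph_domain gh \<subseteq> D (fst gh)"
    using graph_domain_subset by (cases gh) auto
next
  fix gh gh' :: "'g \<times> 'h"
  assume "gh \<noteq> gh' \<and> fst gh = fst gh'"
  then show "graph_domain gh \<inter> graph_domain gh' = {}"
    by (cases gh; cases gh') (auto simp: mem_graph_domain)
next
  fix g :: 'g
  show "D g = (\<Union>gh\<in>{gh. fst gh = g}. id ` graph_domain gh)"
  proof (intro equalityI subsetI)
    fix y assume "y \<in> D g"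
    then have "y \<in> graph_domain (g, - a (- g, y))"
      by (simp add: mem_graph_domain)
    then show "y \<in> (\<Union>gh\<in>{gh. fst gh = g}. id ` graph_domain gh)"
      by force
  qed (use graph_domain_subset in force)
qed auto

lemma direct_dyn_equiv_graph_snd:
  fixes X' :: "'b topology" and D' :: "'h \<Rightarrow> 'b set" and \<theta>' :: "'h \<Rightarrow> 'b \<Rightarrow> 'b"
    and b :: "'h \<times> 'b \<Rightarrow> 'g"
  assumes homeo: "homeomorphic_maps X X' \<phi> \<psi>"
    and D'_subset: "\<And>h. D' h \<subseteq> topspace X'"
    and \<phi>_intertwines: "\<And>g x. x \<in> D (- g) \<Longrightarrow> \<phi> x \<in> D' (- a (g, x)) \<and> \<phi> (\<theta> g x) = \<theta>' (a (g, x)) (\<phi> x)"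
    and \<psi>_domain: "\<And>h y. y \<in> D' (- h) \<Longrightarrow> \<psi> y \<in> D (- b (h, y))"
    and b_a: "\<And>g x. x \<in> D (- g) \<Longrightarrow> b (a (g, x), \<phi> x) = g"
    and a_b: "\<And>h y. y \<in> D' (- h) \<Longrightarrow> a (b (h, y), \<psi> y) = h"
  shows "direct_dyn_equiv X graph_domain (\<lambda>gh. \<theta> (fst gh)) X' D' \<theta>' \<phi> snd"
  unfolding direct_dyn_equiv_def group_hom_def equivariant_def
proof (intro conjI allI impI)
  show "homeomorphic_map X X' \<phi>"
    using homeo homeomorphic_map_maps by blast
  then show "continuous_map X X' \<phi>"
    using homeomorphic_imp_continuous_map by blast
next
  fix gh :: "'g \<times> 'h"
  show "\<phi> ` graph_domain gh \<subseteq> D' (snd gh)"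
    using \<phi>_intertwines[of _ "- fst gh"] by (cases gh) (force simp: mem_graph_domain)
next
  fix gh :: "'g \<times> 'h" and x
  assume "x \<in> graph_domain (- gh)"
  then show "\<phi> (\<theta> (fst gh) x) = \<theta>' (snd gh) (\<phi> x)"
    using \<phi>_intertwines by (cases gh) (auto simp: mem_graph_domain_minus)
next
  fix gh gh' :: "'g \<times> 'h"
  assume "gh \<noteq> gh' \<and> snd gh = snd gh'"
  moreover have "g = g'"
    if "y \<in> D g" "y \<in> D g'" "a (- g, y) = a (- g', y)" for y g g'
  proof -
    have "- g = b (a (- g, y), \<phi> y)" "- g' = b (a (- g', y), \<phi> y)"
      using b_a[of y "- g"] b_a[of y "- g'"] that(1,2) by simp_all
    then show ?thesis
      using that(3) by simp
  qed
  ultimately show "graph_domain gh \<inter> graph_domain gh' = {}"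
    by (cases gh; cases gh') (auto simp: mem_graph_domain)
next
  fix h :: 'h
  show "D' h = (\<Union>gh\<in>{gh. snd gh = h}. \<phi> ` graph_domain gh)"
  proof (intro equalityI subsetI)
    fix z assume z: "z \<in> D' h"
    then have "z \<in> D' (- (- h))" by simp
    then have "\<psi> z \<in> graph_domain (- b (- h, z), h)"
      using \<psi>_domain a_b by (simp add: mem_graph_domain)
    moreover have "\<phi> (\<psi> z) = z"
      using homeo z D'_subset unfolding homeomorphic_maps_def by blast
    ultimately show "z \<in> (\<Union>gh\<in>{gh. snd gh = h}. \<phi> ` graph_domain gh)"
      by force
  next
    fix w assume "w \<in> (\<Union>gh\<in>{gh. snd gh = h}. \<phi> ` graph_domain gh)"
    then obtain g z where "z \<in> D (- (- g))" "a (- g, z) = - h" "w = \<phi> z"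
      by (auto simp: mem_graph_domain)
    then show "w \<in> D' h"
      using \<phi>_intertwines[of z "- g"] by simp
  qed
qed simp

end

theorem proposition3:
  fixes X :: "'a topology" and D :: "'g::group_add \<Rightarrow> 'a set" and \<theta> :: "'g \<Rightarrow> 'a \<Rightarrow> 'a"
    and X' :: "'b topology" and D' :: "'h::group_add \<Rightarrow> 'b set" and \<theta>' :: "'h \<Rightarrow> 'b \<Rightarrow> 'b"
  assumes "partial_action X D \<theta>"
    and "partial_action X' D' \<theta>'"
    and "dyn_equiv X D \<theta> X' D' \<theta>'"
  shows "\<exists>(Z :: 'a topology) (E :: 'g \<times> 'h \<Rightarrow> 'a set) (\<gamma> :: 'g \<times> 'h \<Rightarrow> 'a \<Rightarrow> 'a).
           partial_action Z E \<gamma> \<and>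
           (\<exists>\<phi> \<Psi>. direct_dyn_equiv Z E \<gamma> X D \<theta> \<phi> \<Psi>) \<and>
           (\<exists>\<phi> \<Psi>. direct_dyn_equiv Z E \<gamma> X' D' \<theta>' \<phi> \<Psi>)"
proof -
  obtain \<phi> \<psi> and a :: "'g \<times> 'a \<Rightarrow> 'h" and b :: "'h \<times> 'b \<Rightarrow> 'g" where
    homeo: "homeomorphic_maps X X' \<phi> \<psi>" and
    continuous_a: "continuous_map (subtopology (prod_topology (discrete_topology UNIV) X) (SIGMA g:UNIV. D (- g)))
                      (discrete_topology UNIV) a" and
    \<phi>_intertwines: "\<forall>g x. x \<in> D (- g) \<longrightarrow> \<phi> x \<in> D' (- a (g, x)) \<and> \<phi> (\<theta> g x) = \<theta>' (a (g, x)) (\<phi> x)" and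
    \<psi>_intertwines: "\<forall>h y. y \<in> D' (- h) \<longrightarrow> \<psi> y \<in> D (- b (h, y)) \<and> \<psi> (\<theta>' h y) = \<theta> (b (h, y)) (\<psi> y)" and
    b_a: "\<forall>g x. x \<in> D (- g) \<longrightarrow> b (a (g, x), \<phi> x) = g" and
    a_b: "\<forall>h y. y \<in> D' (- h) \<longrightarrow> a (b (h, y), \<psi> y) = h" and
    cocycle_a: "\<forall>g g' x. x \<in> D (- g) \<and> \<theta> g x \<in> D (- g') \<longrightarrow> a (g' + g, x) = a (g', \<theta> g x) + a (g, x)"
    using assms(3) unfolding dyn_equiv_def by blast
  interpret partial_action_cocycle X D \<theta> a
    using assms(1) continuous_a cocycle_a by unfold_locales blast+
  have "direct_dyn_equiv X graph_domain (\<lambda>gh. \<theta> (fst gh)) X' D' \<theta>' \<phi> snd"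
    by (rule direct_dyn_equiv_graph_snd[where b = b, OF homeo partial_action_domain_subset[OF assms(2)]])
      (use \<phi>_intertwines \<psi>_intertwines b_a a_b in blast)+
  then show ?thesis
    using partial_action_graph direct_dyn_equiv_graph_fst
    by (intro exI[of _ X] exI[of _ graph_domain] exI[of _ "\<lambda>gh. \<theta> (fst gh)"]) blast
qed

end
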